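(* None of seriality, reflexivity, transitivity, symmetry and Euclidicity is definable in $\mathcal{L}(\boxdot)\cup\mathcal{L}(\boxplus)$. That is, for each such property $P$, there is no set $\Gamma\subseteq\mathcal{L}(\boxdot)\cup\mathcal{L}(\boxplus)$ such that for every bimodal frame $\mathcal{F}$, $\mathcal{F}\vDash\Gamma$ iff $\mathcal{F}$ is $P$.
   Context: Fix a nonempty set $\mathbf{P}$ of propositional variables. A bimodal frame is $\langle S,R_1,R_2\rangle$ with $S$ nonempty and $R_1,R_2\subseteq S\times S$; a bimodal model adds a valuation $V:\mathbf{P}\to\mathcal{P}(S)$. A bimodal frame is $P$ (for $P$ among seriality, reflexivity, transitivity, symmetry, Euclidicity) if both $R_1$ and $R_2$ have $P$. Write $R_i(s)=\{t\mid sR_it\}$. $\mathcal{L}(\boxdot):\ \phi::=p\mid\neg\phi\mid(\phi\wedge\phi)\mid\boxdot\phi$ and $\mathcal{L}(\boxplus):\ \phi::=p\mid\neg\phi\mid(\phi\wedge\phi)\mid\boxplus\phi$. Truth: $\mathcal{M},s\vDash p$ iff $s\in V(p)$; Booleans as usual; $\mathcal{M},s\vDash\boxdot\phi$ iff for all $t,u$ with $sR_1t$ and $sR_2u$, ($\mathcal{M},t\vDash\phi\iff\mathcal{M},u\vDash\phi$); $\mathcal{M},s\vDash\boxplus\phi$ iff ($\mathcal{M},t\vDash\phi$ for all $t\in R_1(s)$) or ($\mathcal{M},u\vDash\neg\phi$ for all $u\in R_2(s)$). $\mathcal{F}\vDash\Gamma$ means every formula of $\Gamma$ is true at every state of every model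 based on $\mathcal{F}$. *)

theory Defs
  imports Main
begin

datatype 'p fm = Var 'p | Neg "'p fm" | Conj "'p fm" "'p fm" | Dot "'p fm" | Plus "'p fm"

fun in_L_dot :: "'p fm \<Rightarrow> bool" where
  "in_L_dot (Var p) = True"
| "in_L_dot (Neg a) = in_L_dot a"
| "in_L_dot (Conj a b) = (in_L_dot a \<and> in_L_dot b)"
| "in_L_dot (Dot a) = in_L_dot a"
| "in_L_dot (Plus a) = False"

fun in_L_plus :: "'p fm \<Rightarrow> bool" where
  "in_L_plus (Var p) = True"
| "in_L_plus (Neg a) = in_L_plus a"
| "in_L_plus (Conj a b) = (in_L_plus a \<and> in_L_plus b)"
| "in_L_plus (Dot a) = False"
| "in_L_plus (Plus a) = in_L_plus a"

type_synonym 's frame = "'s set \<times> ('s \<times> 's) set \<times> ('s \<times> 's) set"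

definition is_frame :: "'s frame \<Rightarrow> bool" where
  "is_frame F = (case F of (S, R1, R2) \<Rightarrow> S \<noteq> {} \<and> R1 \<subseteq> S \<times> S \<and> R2 \<subseteq> S \<times> S)"

fun sat :: "'s frame \<Rightarrow> ('p \<Rightarrow> 's set) \<Rightarrow> 's \<Rightarrow> 'p fm \<Rightarrow> bool" where
  "sat F V s (Var p) = (s \<in> V p)"
| "sat F V s (Neg a) = (\<not> sat F V s a)"
| "sat F V s (Conj a b) = (sat F V s a \<and> sat F V s b)"
| "sat F V s (Dot a) = (case F of (S, R1, R2) \<Rightarrow>
      (\<forall>t u. (s, t) \<in> R1 \<longrightarrow> (s, u) \<in> R2 \<longrightarrow> (sat F V t a \<longleftrightarrow> sat F V u a)))"
| "sat F V s (Plus a) = (case F of (S, R1, R2) \<Rightarrow>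
      ((\<forall>t. (s, t) \<in> R1 \<longrightarrow> sat F V t a) \<or> (\<forall>u. (s, u) \<in> R2 \<longrightarrow> \<not> sat F V u a)))"

definition frame_valid :: "'s frame \<Rightarrow> 'p fm set \<Rightarrow> bool" where
  "frame_valid F \<Gamma> = (\<forall>V. (\<forall>p. V p \<subseteq> fst F) \<longrightarrow> (\<forall>s \<in> fst F. \<forall>\<phi> \<in> \<Gamma>. sat F V s \<phi>))"

definition serial_on :: "'s set \<Rightarrow> ('s \<times> 's) set \<Rightarrow> bool" where
  "serial_on S R = (\<forall>s\<in>S. \<exists>t. (s, t) \<in> R)"
definition reflexive_on :: "'s set \<Rightarrow> ('s \<times> 's) set \<Rightarrow> bool" where
  "reflexive_on S R = (\<forall>s\<in>S. (s, s) \<in> R)"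
definition transitive_rel :: "('s \<times> 's) set \<Rightarrow> bool" where
  "transitive_rel R = (\<forall>s t u. (s, t) \<in> R \<longrightarrow> (t, u) \<in> R \<longrightarrow> (s, u) \<in> R)"
definition symmetric_rel :: "('s \<times> 's) set \<Rightarrow> bool" where
  "symmetric_rel R = (\<forall>s t. (s, t) \<in> R \<longrightarrow> (t, s) \<in> R)"
definition euclidean_rel :: "('s \<times> 's) set \<Rightarrow> bool" where
  "euclidean_rel R = (\<forall>s t u. (s, t) \<in> R \<longrightarrow> (s, u) \<in> R \<longrightarrow> (t, u) \<in> R)"

datatype frame_property = Seriality | Reflexivity | Transitivity | Symmetry | Euclidicity

fun rel_has :: "frame_property \<Rightarrow> 's set \<Rightarrow> ('s \<times> 's) set \<Rightarrow> bool" where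
  "rel_has Seriality S R = serial_on S R"
| "rel_has Reflexivity S R = reflexive_on S R"
| "rel_has Transitivity S R = transitive_rel R"
| "rel_has Symmetry S R = symmetric_rel R"
| "rel_has Euclidicity S R = euclidean_rel R"

definition frame_has :: "frame_property \<Rightarrow> 's frame \<Rightarrow> bool" where
  "frame_has P F = (case F of (S, R1, R2) \<Rightarrow> rel_has P S R1 \<and> rel_has P S R2)"

end

theory Submission
  imports Defs
begin

text \<open>If both accessibility relations coincide with one partial function, every formula
\<open>\<boxdot>\<phi>\<close> and \<open>\<boxplus>\<phi>\<close> is true everywhere, so a formula is valid on such a frame iff it is a
propositional tautology once its modal subformulas are read as true. Hence all such frames
validate the same formulas. The one-point reflexive frame has each of the five properties,
while the chain \<open>a \<rightarrow> b \<rightarrow> c\<close> has none of them, so no set of formulas separates them.\<close>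

fun eval_boxes_true :: "('p \<Rightarrow> bool) \<Rightarrow> 'p fm \<Rightarrow> bool" where
  "eval_boxes_true f (Var p) = f p"
| "eval_boxes_true f (Neg a) = (\<not> eval_boxes_true f a)"
| "eval_boxes_true f (Conj a b) = (eval_boxes_true f a \<and> eval_boxes_true f b)"
| "eval_boxes_true f (Dot a) = True"
| "eval_boxes_true f (Plus a) = True"

lemma sat_single_valued_diag:
  assumes "single_valued R"
  shows "sat (S, R, R) V s \<phi> = eval_boxes_true (\<lambda>p. s \<in> V p) \<phi>"
  using assms by (induction \<phi> arbitrary: s) (auto dest: single_valuedD)

lemma frame_valid_single_valued_diag:
  fixes S :: "'s set"
  assumes "single_valued R" and "S \<noteq> {}"
  shows "frame_valid (S, R, R) (\<Gamma> :: 'p fm set) = (\<forall>\<phi>\<in>\<Gamma>. \<forall>f. eval_boxes_true f \<phi>)"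
proof
  assume valid: "frame_valid (S, R, R) \<Gamma>"
  obtain s where s: "s \<in> S" using \<open>S \<noteq> {}\<close> by blast
  show "\<forall>\<phi>\<in>\<Gamma>. \<forall>f. eval_boxes_true f \<phi>"
  proof (intro ballI allI)
    fix \<phi> f assume "\<phi> \<in> \<Gamma>"
    define V :: "'p \<Rightarrow> 's set" where "V p = (if f p then S else {})" for p
    have "sat (S, R, R) V s \<phi>"
      using valid \<open>\<phi> \<in> \<Gamma>\<close> s unfolding frame_valid_def V_def by simp
    moreover have "(\<lambda>p. s \<in> V p) = f" using s unfolding V_def by auto
    ultimately show "eval_boxes_true f \<phi>"
      using sat_single_valued_diag[OF \<open>single_valued R\<close>] by metis
  qed
next
  assume "\<forall>\<phi>\<in>\<Gamma>. \<forall>f. eval_boxes_true f \<phi>"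
  then show "frame_valid (S, R, R) \<Gamma>"
    unfolding frame_valid_def sat_single_valued_diag[OF \<open>single_valued R\<close>] by simp
qed

lemma frame_has_loop: "frame_has P ({a}, {(a, a)}, {(a, a)})"
  unfolding frame_has_def
  by (cases P) (auto simp: serial_on_def reflexive_on_def transitive_rel_def
      symmetric_rel_def euclidean_rel_def)

lemma not_frame_has_chain:
  assumes "distinct [a, b, c]"
  shows "\<not> frame_has P ({a, b, c}, {(a, b), (b, c)}, {(a, b), (b, c)})"
  unfolding frame_has_def using assms
  by (cases P) (auto simp: serial_on_def reflexive_on_def transitive_rel_def
      symmetric_rel_def euclidean_rel_def)

lemma infinite_obtain_three:
  assumes "infinite (UNIV :: 'a set)"
  obtains a b c :: 'a where "distinct [a, b, c]"
proof -
  obtain A :: "'a set" where "finite A" "card A = 3"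
    using infinite_arbitrarily_large[OF assms] by blast
  then show ?thesis using that by (auto simp: card_3_iff)
qed

theorem proposition5p3:
  fixes P :: frame_property
  assumes "infinite (UNIV :: 's set)"
  shows "\<not> (\<exists>\<Gamma> :: 'p fm set. (\<forall>\<phi>\<in>\<Gamma>. in_L_dot \<phi> \<or> in_L_plus \<phi>) \<and>
            (\<forall>F :: 's frame. is_frame F \<longrightarrow> (frame_valid F \<Gamma> \<longleftrightarrow> frame_has P F)))"
proof
  assume "\<exists>\<Gamma> :: 'p fm set. (\<forall>\<phi>\<in>\<Gamma>. in_L_dot \<phi> \<or> in_L_plus \<phi>) \<and>
            (\<forall>F :: 's frame. is_frame F \<longrightarrow> (frame_valid F \<Gamma> \<longleftrightarrow> frame_has P F))"
  then obtain \<Gamma> :: "'p fm set" where defines_P: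
    "\<And>F :: 's frame. is_frame F \<Longrightarrow> frame_valid F \<Gamma> \<longleftrightarrow> frame_has P F" by blast
  obtain a b c :: 's where abc: "distinct [a, b, c]"
    using infinite_obtain_three[OF assms] .
  define loop :: "'s frame" where "loop = ({a}, {(a, a)}, {(a, a)})"
  define chain :: "'s frame" where "chain = ({a, b, c}, {(a, b), (b, c)}, {(a, b), (b, c)})"
  have frames: "is_frame loop" "is_frame chain"
    unfolding loop_def chain_def is_frame_def by auto
  have "single_valued {(a, a)}" "single_valued {(a, b), (b, c)}"
    using abc by (auto simp: single_valued_def)
  then have "frame_valid loop \<Gamma> = frame_valid chain \<Gamma>"
    unfolding loop_def chain_def by (simp add: frame_valid_single_valued_diag)
  moreover have "frame_valid loop \<Gamma>"
    using defines_P[OF frames(1)] frame_has_loop unfolding loop_def by simp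
  ultimately have "frame_has P chain"
    using defines_P[OF frames(2)] by simp
  then show False using not_frame_has_chain[OF abc] unfolding chain_def by contradiction
qed

end
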